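(* Let $(G,\mathbf p)$ be a framework (with $\mathbf p$ pinned) and let $E$ be a stiff-bar energy at $\mathbf p$. A trajectory $\mathbf p(t)$ at $\mathbf p$ is a $(j,k)$-flex of $(G,\mathbf p)$ if and only if it is a $(j,2k)$ $E$-flex. Furthermore, $\mathbf p(t)$ is a $(j,2k)$ $E$-flex if and only if it is a $(j,2k+1)$ $E$-flex.
   Context: Fix a dimension $d$. A configuration is $\mathbf p=(\mathbf p_1,\dots,\mathbf p_n)$, $\mathbf p_i\in\mathbb R^d$; a framework $(G,\mathbf p)$ consists of a graph $G$ on $\{1,\dots,n\}$ and a configuration with $\mathbf p_i\ne\mathbf p_j$ for every edge $ij$. A configuration $\mathbf q$ is in $\ell$-pinned position if $\mathbf q_1=0$ and, for $2\le i\le\ell+1$, $\mathbf q_i\in\mathrm{span}(e_1,\dots,e_{i-1})$; these form a linear space. If $\mathbf p$ has $\ell$-dimensional affine span, it is pinned if $\mathbf p_1,\dots,\mathbf p_{\ell+1}$ are affinely independent and $\mathbf p$ is in $\ell$-pinned position. Throughout, $\mathbf p$ is pinned with $\ell$-dimensional affine span, and all trajectories are $\ell$-pinned. A trajectory at $\mathbf p$ is an analytic non-constant map $t\mapsto\mathbf p(t)$ into $\ell$-pinned configuration space, $t\in[0,\varepsilon]$, with $\mathbf p(0)=\mathbf p$. A $C^k$ function $\varphi(t)$ is $k$-vanishing if $\varphi^{(i)}(0)=0$ for $1\le i\le k$, and $k$-active if $(k-1)$-vanishing but not $k$-vanishing. With $\mathbf m(\mathbf q)=(|\mathbf q_i-\mathbf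 q_j|^2)_{ij\in E(G)}$, a $(j,k)$-flex is a $j$-active trajectory with $\mathbf m(\mathbf p(t))$ $k$-vanishing. For a function $f$ on $\ell$-pinned configuration space analytic near $\mathbf p$, a $(j,k)$ $f$-flex is a $j$-active trajectory $\mathbf p(t)$ at $\mathbf p$ with $f(\mathbf p(t))$ $k$-vanishing; an $E$-flex is an $f$-flex with $f=E$. A stiff-bar energy at $\mathbf p$ is $E(\mathbf q)=\sum_{ij\in E(G)}E_{ij}(|\mathbf q_i-\mathbf q_j|)$, where each $E_{ij}:\mathbb R\to\mathbb R$ is analytic at $d_{ij}=|\mathbf p_i-\mathbf p_j|\ne0$, has a strict local minimum at $d_{ij}$, and $E_{ij}''(d_{ij})>0$. *)

theory Defs
  imports "HOL-Analysis.Analysis"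
begin

text \<open>Points are vectors in real^'d; the index type 'd is linearly ordered, so that
  the standard basis vectors are ordered e_1, e_2, ... (e_m is the axis vector at the
  index of rank m-1). Vertices are 1..n; a configuration is a map nat => real^'d
  (only the values on 1..n matter).\<close>

definition real_analytic_at :: "(real \<Rightarrow> real) \<Rightarrow> real \<Rightarrow> bool" where
  "real_analytic_at f x \<longleftrightarrow>
     (\<exists>r>0. \<exists>a::nat \<Rightarrow> real. \<forall>y. \<bar>y - x\<bar> < r \<longrightarrow> (\<lambda>k. a k * (y - x) ^ k) sums f y)"

definition first_axes_span :: "nat \<Rightarrow> (real^'d::{finite,linorder}) set" where
  "first_axes_span m = span {axis c 1 | c::'d. card {c'. c' < c} < m}"

definition pinned_position :: "nat \<Rightarrow> (nat \<Rightarrow> real^'d::{finite,linorder}) \<Rightarrow> bool" where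
  "pinned_position l q \<longleftrightarrow> q 1 = 0 \<and>
     (\<forall>i. 2 \<le> i \<and> i \<le> l + 1 \<longrightarrow> q i \<in> first_axes_span (i - 1))"

definition is_graph :: "nat \<Rightarrow> (nat \<times> nat) set \<Rightarrow> bool" where
  "is_graph n Ed \<longleftrightarrow> (\<forall>(i,j)\<in>Ed. 1 \<le> i \<and> i < j \<and> j \<le> n)"

definition framework :: "nat \<Rightarrow> (nat \<times> nat) set \<Rightarrow> (nat \<Rightarrow> real^'d::{finite,linorder}) \<Rightarrow> bool" where
  "framework n Ed p \<longleftrightarrow> is_graph n Ed \<and> (\<forall>(i,j)\<in>Ed. p i \<noteq> p j)"

definition pinned :: "nat \<Rightarrow> nat \<Rightarrow> (nat \<Rightarrow> real^'d::{finite,linorder}) \<Rightarrow> bool" where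
  "pinned n l p \<longleftrightarrow> aff_dim (p ` {1..n}) = int l \<and> l + 1 \<le> n \<and>
     inj_on p {1..l+1} \<and> \<not> affine_dependent (p ` {1..l+1}) \<and> pinned_position l p"

definition k_vanishing :: "(real \<Rightarrow> real) \<Rightarrow> nat \<Rightarrow> bool" where
  "k_vanishing \<phi> k \<longleftrightarrow> (\<forall>i\<in>{1..k}. (deriv ^^ i) \<phi> 0 = 0)"

definition k_active :: "(real \<Rightarrow> real) \<Rightarrow> nat \<Rightarrow> bool" where
  "k_active \<phi> k \<longleftrightarrow> k_vanishing \<phi> (k - 1) \<and> \<not> k_vanishing \<phi> k"

definition traj_vanishing :: "nat \<Rightarrow> (real \<Rightarrow> nat \<Rightarrow> real^'d::{finite,linorder}) \<Rightarrow> nat \<Rightarrow> bool" where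
  "traj_vanishing n P k \<longleftrightarrow> (\<forall>i\<in>{1..n}. \<forall>c. k_vanishing (\<lambda>t. P t i $ c) k)"

definition traj_active :: "nat \<Rightarrow> (real \<Rightarrow> nat \<Rightarrow> real^'d::{finite,linorder}) \<Rightarrow> nat \<Rightarrow> bool" where
  "traj_active n P k \<longleftrightarrow> traj_vanishing n P (k - 1) \<and> \<not> traj_vanishing n P k"

definition trajectory ::
  "nat \<Rightarrow> nat \<Rightarrow> (nat \<Rightarrow> real^'d::{finite,linorder}) \<Rightarrow> real \<Rightarrow> (real \<Rightarrow> nat \<Rightarrow> real^'d::{finite,linorder}) \<Rightarrow> bool" where
  "trajectory n l p \<epsilon> P \<longleftrightarrow> \<epsilon> > 0 \<and>
     (\<forall>t\<in>{0..\<epsilon>}. \<forall>i\<in>{1..n}. \<forall>c. real_analytic_at (\<lambda>s. P s i $ c) t) \<and>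
     (\<forall>t\<in>{0..\<epsilon>}. pinned_position l (P t)) \<and>
     (\<exists>t\<in>{0..\<epsilon>}. \<exists>i\<in>{1..n}. P t i \<noteq> P 0 i) \<and>
     (\<forall>i\<in>{1..n}. P 0 i = p i)"

definition bar_flex ::
  "nat \<Rightarrow> (nat \<times> nat) set \<Rightarrow> nat \<Rightarrow> (nat \<Rightarrow> real^'d::{finite,linorder}) \<Rightarrow> real \<Rightarrow> (real \<Rightarrow> nat \<Rightarrow> real^'d::{finite,linorder}) \<Rightarrow> nat \<Rightarrow> nat \<Rightarrow> bool" where
  "bar_flex n Ed l p \<epsilon> P j k \<longleftrightarrow> trajectory n l p \<epsilon> P \<and> traj_active n P j \<and>
     (\<forall>(a,b)\<in>Ed. k_vanishing (\<lambda>t. (norm (P t a - P t b))\<^sup>2) k)"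

definition f_flex ::
  "nat \<Rightarrow> nat \<Rightarrow> (nat \<Rightarrow> real^'d::{finite,linorder}) \<Rightarrow> real \<Rightarrow> ((nat \<Rightarrow> real^'d::{finite,linorder}) \<Rightarrow> real) \<Rightarrow> (real \<Rightarrow> nat \<Rightarrow> real^'d::{finite,linorder}) \<Rightarrow> nat \<Rightarrow> nat \<Rightarrow> bool" where
  "f_flex n l p \<epsilon> f P j k \<longleftrightarrow> trajectory n l p \<epsilon> P \<and> traj_active n P j \<and>
     k_vanishing (\<lambda>t. f (P t)) k"

definition energy :: "(nat \<times> nat) set \<Rightarrow> (nat \<Rightarrow> nat \<Rightarrow> real \<Rightarrow> real) \<Rightarrow> (nat \<Rightarrow> real^'d::{finite,linorder}) \<Rightarrow> real" where
  "energy Ed Eij q = (\<Sum>(i,j)\<in>Ed. Eij i j (norm (q i - q j)))"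

definition stiff_bar_energy ::
  "(nat \<times> nat) set \<Rightarrow> (nat \<Rightarrow> nat \<Rightarrow> real \<Rightarrow> real) \<Rightarrow> (nat \<Rightarrow> real^'d::{finite,linorder}) \<Rightarrow> bool" where
  "stiff_bar_energy Ed Eij p \<longleftrightarrow> (\<forall>(i,j)\<in>Ed.
     let dij = norm (p i - p j) in
       real_analytic_at (Eij i j) dij \<and>
       (\<exists>r>0. \<forall>x. 0 < \<bar>x - dij\<bar> \<and> \<bar>x - dij\<bar> < r \<longrightarrow> Eij i j dij < Eij i j x) \<and>
       (deriv ^^ 2) (Eij i j) dij > 0)"

end

theory Submission
  imports Defs "HOL-Complex_Analysis.Complex_Analysis"
begin

(* Along an analytic trajectory the squared bar lengths m_ij(t) and the energy E(p(t)) are real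
   analytic, and for an analytic f, k-vanishing means exactly f(t) - f(0) = O(t^(k+1)), while
   failing to be k-vanishing means t^k = O(f(t) - f(0)).  Near a strict local minimum d with
   E_ij''(d) > 0, E_ij(x) - E_ij(d) has exact order (x - d)^2, and sqrt m - d has exact order
   m - d^2; so each summand of E(p(t)) - E(p) is a nonnegative function of exact order
   (m_ij(t) - m_ij(0))^2.  Nonnegativity rules out cancellation, hence E(p(t)) - E(p) = O(t^N)
   iff every (m_ij(t) - m_ij(0))^2 = O(t^N).  As these squares vanish to even order,
   N = 2k+1 and N = 2k+2 both say that every m_ij is k-vanishing. *)

section \<open>Holomorphic extensions of real functions\<close>

lemma isCont_imp_tendsto_nhds: "isCont f x \<Longrightarrow> (f \<longlongrightarrow> f x) (nhds x)"
  by (simp only: isCont_def tendsto_at_iff_tendsto_nhds)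

lemma eventually_of_real_in_ball:
  "0 < e \<Longrightarrow> \<forall>\<^sub>F t in nhds x. complex_of_real t \<in> ball (of_real x) e"
  by (simp add: eventually_nhds_metric dist_commute) (metis dist_of_real)

lemma has_vector_derivative_of_realD:
  assumes "((\<lambda>s. complex_of_real (g s)) has_vector_derivative D) (at t)"
  shows "(g has_real_derivative Re D) (at t)" "D = of_real (Re D)"
proof -
  show "(g has_real_derivative Re D) (at t)"
    using has_field_derivative_Re[OF assms] by simp
  have "((\<lambda>s. 0) has_real_derivative Im D) (at t)"
    using has_field_derivative_Im[OF assms] by simp
  then have "Im D = 0"
    using DERIV_const DERIV_unique by blast
  then show "D = of_real (Re D)"
    by (simp add: complex_eq_iff)
qed

text \<open>Real analyticity is handled through holomorphic extensions, which give access to the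
  library's theory of holomorphic functions (higher derivatives, the identity theorem,
  factoring out a zero of finite order).\<close>

definition has_holomorphic_extension :: "(real \<Rightarrow> real) \<Rightarrow> real \<Rightarrow> bool" where
  "has_holomorphic_extension f x \<longleftrightarrow>
     (\<exists>F. F analytic_on {complex_of_real x} \<and>
          (\<forall>\<^sub>F t in nhds x. F (complex_of_real t) = complex_of_real (f t)))"

lemma real_power_series_summable_complex:
  assumes "\<And>y. \<bar>y - x\<bar> < r \<Longrightarrow> (\<lambda>k. a k * (y - x) ^ k) sums f y" "w \<in> ball (of_real x) r"
  shows "summable (\<lambda>k. complex_of_real (a k) * (w - of_real x) ^ k)"
proof -
  define \<rho> where "\<rho> = norm (w - of_real x)"
  define y where "y = x + (\<rho> + r) / 2"
  have "0 \<le> \<rho>" "\<rho> < r"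
    using assms(2) by (simp_all add: \<rho>_def dist_norm norm_minus_commute)
  then have y: "\<bar>y - x\<bar> < r" "norm (w - of_real x) < norm (complex_of_real (y - x))"
    unfolding y_def \<rho>_def[symmetric] norm_of_real by auto
  have "summable (\<lambda>k. complex_of_real (a k * (y - x) ^ k))"
    using sums_summable[OF assms(1)[OF y(1)]] by (simp only: summable_complex_of_real)
  then have "summable (\<lambda>k. complex_of_real (a k) * complex_of_real (y - x) ^ k)"
    by simp
  from powser_inside[OF this y(2)] show ?thesis .
qed

lemma real_analytic_at_imp_has_holomorphic_extension:
  assumes "real_analytic_at f x"
  shows "has_holomorphic_extension f x"
proof -
  obtain r a where "r > 0" and f_sums: "\<And>y. \<bar>y - x\<bar> < r \<Longrightarrow> (\<lambda>k. a k * (y - x) ^ k) sums f y"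
    using assms unfolding real_analytic_at_def by blast
  define F where "F w = (\<Sum>k. complex_of_real (a k) * (w - of_real x) ^ k)" for w
  have F_sums: "(\<lambda>k. complex_of_real (a k) * (w - of_real x) ^ k) sums F w"
    if "w \<in> ball (of_real x) r" for w
    unfolding F_def using real_power_series_summable_complex[OF f_sums that] by (rule summable_sums)
  have "F analytic_on ball (of_real x) r"
    by (rule power_series_analytic) (rule F_sums)
  then have "F analytic_on {of_real x}"
    by (rule analytic_on_subset) (simp add: \<open>r > 0\<close>)
  moreover have "F (of_real t) = of_real (f t)" if "of_real t \<in> ball (complex_of_real x) r" for t
  proof -
    have "\<bar>t - x\<bar> < r"
      using that by (simp add: dist_of_real dist_real_def abs_minus_commute)
    then have "(\<lambda>k. complex_of_real (a k) * (of_real t - of_real x) ^ k) sums of_real (f t)"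
      using sums_of_real[OF f_sums] by simp
    then show ?thesis
      using F_sums[OF that] sums_unique2 by blast
  qed
  then have "\<forall>\<^sub>F t in nhds x. F (of_real t) = of_real (f t)"
    using eventually_of_real_in_ball[OF \<open>r > 0\<close>] by (rule eventually_mono[rotated]) blast
  ultimately show ?thesis
    unfolding has_holomorphic_extension_def by blast
qed

context
  fixes F :: "complex \<Rightarrow> complex" and f :: "real \<Rightarrow> real" and x :: real
  assumes analytic: "F analytic_on {of_real x}"
    and extends: "\<forall>\<^sub>F t in nhds x. F (of_real t) = of_real (f t)"
begin

lemma holomorphic_extension_DERIV:
  "(f has_real_derivative deriv f x) (at x)" "deriv F (of_real x) = of_real (deriv f x)"
proof -
  have "(F has_field_derivative deriv F (of_real x)) (at (of_real x))"
    using analytic by (simp add: analytic_on_imp_differentiable_at DERIV_deriv_iff_field_differentiable)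
  then have "((\<lambda>s. F (of_real s)) has_vector_derivative deriv F (of_real x)) (at x)"
    by (rule has_vector_derivative_real_field)
  moreover have "((\<lambda>s. F (of_real s)) has_vector_derivative D) (at x) \<longleftrightarrow>
      ((\<lambda>s. of_real (f s)) has_vector_derivative D) (at x)" for D
    by (rule has_vector_derivative_cong_ev[where S=UNIV, simplified])
      (use extends eventually_nhds_x_imp_x[OF extends] in auto)
  ultimately have "((\<lambda>s. of_real (f s)) has_vector_derivative deriv F (of_real x)) (at x)"
    by simp
  note D = has_vector_derivative_of_realD[OF this]
  then show "deriv F (of_real x) = of_real (deriv f x)"
    using DERIV_imp_deriv by metis
  with D show "(f has_real_derivative deriv f x) (at x)"
    by simp
qed

lemma holomorphic_extension_eventually:
  "\<forall>\<^sub>F t in nhds x. F analytic_on {of_real t} \<and> (\<forall>\<^sub>F s in nhds t. F (of_real s) = of_real (f s))"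
proof -
  obtain e where "0 < e" and hol: "F holomorphic_on ball (of_real x) e"
    using analytic analytic_at_ball by blast
  have "\<forall>\<^sub>F t in nhds x. F analytic_on {of_real t}"
    using eventually_of_real_in_ball[OF \<open>0 < e\<close>]
    by eventually_elim (rule holomorphic_on_imp_analytic_at[OF hol open_ball])
  moreover have "\<forall>\<^sub>F t in nhds x. \<forall>\<^sub>F s in nhds t. F (of_real s) = of_real (f s)"
    using extends by (simp only: eventually_eventually)
  ultimately show ?thesis
    by (rule eventually_conj)
qed

end

lemma holomorphic_extension_higher_deriv:
  assumes "F analytic_on {of_real x}" "\<forall>\<^sub>F t in nhds x. F (of_real t) = of_real (f t)"
  shows "\<forall>\<^sub>F t in nhds x. (deriv ^^ i) F (of_real t) = of_real ((deriv ^^ i) f t)"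
proof (induction i)
  case 0
  then show ?case using assms(2) by simp
next
  case (Suc i)
  have "(deriv ^^ i) F analytic_on {of_real x}"
    using assms(1) by (rule analytic_higher_deriv)
  from holomorphic_extension_eventually[OF this Suc.IH] show ?case
  proof eventually_elim
    case (elim t)
    then show ?case
      using holomorphic_extension_DERIV(2)[of "(deriv ^^ i) F" t "(deriv ^^ i) f"] by simp
  qed
qed

lemma has_holomorphic_extensionE:
  assumes "has_holomorphic_extension f x"
  obtains e F where "0 < e" "F holomorphic_on ball (of_real x) e"
    "\<forall>\<^sub>F t in nhds x. F (of_real t) = of_real (f t)"
    "\<forall>i. (deriv ^^ i) F (of_real x) = of_real ((deriv ^^ i) f x)"
proof -
  obtain F where F: "F analytic_on {of_real x}" "\<forall>\<^sub>F t in nhds x. F (of_real t) = of_real (f t)"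
    using assms unfolding has_holomorphic_extension_def by blast
  moreover obtain e where "0 < e" "F holomorphic_on ball (of_real x) e"
    using F(1) analytic_at_ball by blast
  moreover have "(deriv ^^ i) F (of_real x) = of_real ((deriv ^^ i) f x)" for i
    using eventually_nhds_x_imp_x[OF holomorphic_extension_higher_deriv[OF F]] .
  ultimately show thesis
    using that by blast
qed

lemma has_holomorphic_extension_DERIV:
  "has_holomorphic_extension f x \<Longrightarrow> (f has_real_derivative deriv f x) (at x)"
  using holomorphic_extension_DERIV(1) unfolding has_holomorphic_extension_def by blast

lemma has_holomorphic_extension_imp_isCont:
  "has_holomorphic_extension f x \<Longrightarrow> isCont f x"
  using has_holomorphic_extension_DERIV DERIV_isCont by blast

lemma has_holomorphic_extension_const: "has_holomorphic_extension (\<lambda>t. c) x"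
  unfolding has_holomorphic_extension_def
  by (intro exI[of _ "\<lambda>w. of_real c"] conjI analytic_intros) simp_all

lemma has_holomorphic_extension_binary:
  assumes "has_holomorphic_extension f x" "has_holomorphic_extension g x"
    and "\<And>F G. F analytic_on {of_real x} \<Longrightarrow> G analytic_on {of_real x} \<Longrightarrow>
      (\<lambda>w. H (F w) (G w)) analytic_on {of_real x}"
    and "\<And>a b. H (of_real a) (of_real b) = of_real (h a b)"
  shows "has_holomorphic_extension (\<lambda>t. h (f t) (g t)) x"
proof -
  obtain F G where "F analytic_on {of_real x}" "\<forall>\<^sub>F t in nhds x. F (of_real t) = of_real (f t)"
    "G analytic_on {of_real x}" "\<forall>\<^sub>F t in nhds x. G (of_real t) = of_real (g t)"
    using assms(1,2) unfolding has_holomorphic_extension_def by blast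
  then show ?thesis
    unfolding has_holomorphic_extension_def using assms(3,4)
    by (intro exI[of _ "\<lambda>w. H (F w) (G w)"] conjI) (auto elim: eventually_elim2)
qed

lemma has_holomorphic_extension_add:
  "has_holomorphic_extension f x \<Longrightarrow> has_holomorphic_extension g x \<Longrightarrow>
    has_holomorphic_extension (\<lambda>t. f t + g t) x"
  by (rule has_holomorphic_extension_binary[where H = "(+)"]) (auto intro: analytic_intros)

lemma has_holomorphic_extension_diff:
  "has_holomorphic_extension f x \<Longrightarrow> has_holomorphic_extension g x \<Longrightarrow>
    has_holomorphic_extension (\<lambda>t. f t - g t) x"
  by (rule has_holomorphic_extension_binary[where H = "(-)"]) (auto intro: analytic_intros)

lemma has_holomorphic_extension_mult:
  "has_holomorphic_extension f x \<Longrightarrow> has_holomorphic_extension g x \<Longrightarrow>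
    has_holomorphic_extension (\<lambda>t. f t * g t) x"
  by (rule has_holomorphic_extension_binary[where H = "(*)"]) (auto intro: analytic_intros)

lemma has_holomorphic_extension_sum:
  assumes "\<And>s. s \<in> S \<Longrightarrow> has_holomorphic_extension (f s) x"
  shows "has_holomorphic_extension (\<lambda>t. \<Sum>s\<in>S. f s t) x"
  using assms
  by (induction S rule: infinite_finite_induct)
    (simp_all add: has_holomorphic_extension_const has_holomorphic_extension_add)

lemma has_holomorphic_extension_compose:
  assumes g: "has_holomorphic_extension g x" and f: "has_holomorphic_extension f (g x)"
  shows "has_holomorphic_extension (\<lambda>t. f (g t)) x"
proof -
  obtain G where G: "G analytic_on {of_real x}" "\<forall>\<^sub>F t in nhds x. G (of_real t) = of_real (g t)"
    using g unfolding has_holomorphic_extension_def by blast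
  obtain F where F: "F analytic_on {of_real (g x)}" "\<forall>\<^sub>F y in nhds (g x). F (of_real y) = of_real (f y)"
    using f unfolding has_holomorphic_extension_def by blast
  have "(F \<circ> G) analytic_on {of_real x}"
    using analytic_on_compose[OF G(1)] F(1) eventually_nhds_x_imp_x[OF G(2)] by simp
  moreover have "(g \<longlongrightarrow> g x) (nhds x)"
    using has_holomorphic_extension_imp_isCont[OF g] by (rule isCont_imp_tendsto_nhds)
  then have "\<forall>\<^sub>F t in nhds x. F (of_real (g t)) = of_real (f (g t))"
    using eventually_compose_filterlim[OF F(2)] by blast
  with G(2) have "\<forall>\<^sub>F t in nhds x. (F \<circ> G) (of_real t) = of_real (f (g t))"
    by eventually_elim simp
  ultimately show ?thesis
    unfolding has_holomorphic_extension_def by blast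
qed

lemma has_holomorphic_extension_sqrt:
  assumes "0 < y"
  shows "has_holomorphic_extension sqrt y"
proof -
  have "csqrt analytic_on {of_real y}"
    using analytic_on_subset[OF analytic_on_csqrt] assms by (auto simp: nonpos_Reals_def)
  moreover have "\<forall>\<^sub>F t in nhds y. t \<in> {0<..}"
    using assms by (intro eventually_nhds_in_open) auto
  then have "\<forall>\<^sub>F t in nhds y. csqrt (of_real t) = of_real (sqrt t)"
    by eventually_elim (simp add: csqrt_of_real)
  ultimately show ?thesis
    unfolding has_holomorphic_extension_def by blast
qed

section \<open>Orders of vanishing as Landau bounds\<close>

lemma isCont_imp_bigtheta_1:
  fixes h :: "'a::t2_space \<Rightarrow> real"
  assumes "isCont h x" "h x \<noteq> 0"
  shows "h \<in> \<Theta>[nhds x](\<lambda>_. 1)"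
  using assms by (intro bigthetaI_tendsto[of "h x"]) (simp_all add: isCont_imp_tendsto_nhds)

lemma has_holomorphic_extension_flat:
  assumes "has_holomorphic_extension f x" "\<And>i. 0 < i \<Longrightarrow> (deriv ^^ i) f x = 0"
  shows "\<forall>\<^sub>F t in nhds x. f t = f x"
proof -
  obtain F e where "0 < e" and hol: "F holomorphic_on ball (of_real x) e"
    and F: "\<forall>\<^sub>F t in nhds x. F (of_real t) = of_real (f t)"
    and derivs: "\<forall>i. (deriv ^^ i) F (of_real x) = of_real ((deriv ^^ i) f x)"
    using has_holomorphic_extensionE[OF assms(1)] by blast
  have const: "F w = of_real (f x)" if "w \<in> ball (of_real x) e" for w
    using holomorphic_fun_eq_const_on_connected[OF hol open_ball connected_ball _ _ that, of "of_real x"]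
      \<open>0 < e\<close> eventually_nhds_x_imp_x[OF F] assms(2) by (simp add: derivs)
  show ?thesis
    using eventually_of_real_in_ball[OF \<open>0 < e\<close>] F by eventually_elim (use const in force)
qed

lemma has_holomorphic_extension_factor:
  assumes "has_holomorphic_extension f x" "0 < n" "(deriv ^^ n) f x \<noteq> 0"
    and "\<And>i. 0 < i \<Longrightarrow> i < n \<Longrightarrow> (deriv ^^ i) f x = 0"
  obtains g where "isCont g (complex_of_real x)" "g (complex_of_real x) \<noteq> 0"
    "\<forall>\<^sub>F t in nhds x. complex_of_real (f t - f x) = complex_of_real (t - x) ^ n * g (of_real t)"
proof -
  obtain F e where "0 < e" and hol: "F holomorphic_on ball (of_real x) e"
    and F: "\<forall>\<^sub>F t in nhds x. F (of_real t) = of_real (f t)"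
    and derivs: "\<forall>i. (deriv ^^ i) F (of_real x) = of_real ((deriv ^^ i) f x)"
    using has_holomorphic_extensionE[OF assms(1)] by blast
  have nonzero: "(deriv ^^ n) F (of_real x) \<noteq> 0"
    and zeros: "\<And>i. 0 < i \<Longrightarrow> i < n \<Longrightarrow> (deriv ^^ i) F (of_real x) = 0"
    using assms(3,4) by (simp_all add: derivs)
  obtain r g where "0 < r" and "g holomorphic_on ball (of_real x) r"
    and factor: "\<And>w. w \<in> ball (of_real x) r \<Longrightarrow> F w - F (of_real x) = (w - of_real x) ^ n * g w"
    and nonzero_g: "\<And>w. w \<in> ball (of_real x) r \<Longrightarrow> g w \<noteq> 0"
  proof (rule holomorphic_factor_order_of_zero[OF hol open_ball _ \<open>0 < n\<close> nonzero zeros])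
    show "of_real x \<in> ball (complex_of_real x) e"
      using \<open>0 < e\<close> by simp
  next
    fix g r
    assume "0 < r" "g holomorphic_on ball (of_real x) r"
      "\<And>w. w \<in> ball (of_real x) r \<Longrightarrow> F w - F (of_real x) = (w - of_real x) ^ n * g w"
      "\<And>w. w \<in> ball (of_real x) r \<Longrightarrow> g w \<noteq> 0"
    then show thesis
      by (rule that)
  qed
  have "isCont g (of_real x)"
    using holomorphic_on_imp_continuous_on[OF \<open>g holomorphic_on _\<close>] \<open>0 < r\<close>
    by (simp add: continuous_on_eq_continuous_at)
  moreover have "g (of_real x) \<noteq> 0"
    using \<open>0 < r\<close> nonzero_g by simp
  moreover have "\<forall>\<^sub>F t in nhds x. complex_of_real (f t - f x) = complex_of_real (t - x) ^ n * g (of_real t)"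
    using eventually_of_real_in_ball[OF \<open>0 < r\<close>] F
  proof eventually_elim
    case (elim t)
    then show ?case
      using factor[OF elim(1)] eventually_nhds_x_imp_x[OF F] by simp
  qed
  ultimately show thesis
    by (rule that)
qed

lemma has_holomorphic_extension_bigtheta_power:
  assumes "has_holomorphic_extension f x" "0 < n" "(deriv ^^ n) f x \<noteq> 0"
    and "\<And>i. 0 < i \<Longrightarrow> i < n \<Longrightarrow> (deriv ^^ i) f x = 0"
  shows "(\<lambda>t. f t - f x) \<in> \<Theta>[nhds x](\<lambda>t. (t - x) ^ n)"
proof -
  obtain g where "isCont g (complex_of_real x)" "g (complex_of_real x) \<noteq> 0"
    and factor: "\<forall>\<^sub>F t in nhds x. complex_of_real (f t - f x) = complex_of_real (t - x) ^ n * g (of_real t)"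
    using has_holomorphic_extension_factor[OF assms] by blast
  define h where "h t = cmod (g (of_real t))" for t
  have "isCont (\<lambda>t. g (of_real t)) x"
    using isCont_o2[OF isCont_of_real[OF continuous_ident] \<open>isCont g _\<close>] by simp
  then have "h \<in> \<Theta>[nhds x](\<lambda>_. 1)"
    unfolding h_def using \<open>g (of_real x) \<noteq> 0\<close> by (intro isCont_imp_bigtheta_1 isCont_norm) simp_all
  from landau_theta.mult_left[OF this, of "\<lambda>t. \<bar>t - x\<bar> ^ n"]
  have bigtheta: "(\<lambda>t. \<bar>t - x\<bar> ^ n * h t) \<in> \<Theta>[nhds x](\<lambda>t. \<bar>(t - x) ^ n\<bar>)"
    by (simp only: mult_1_right power_abs)
  from factor have "\<forall>\<^sub>F t in nhds x. \<bar>f t - f x\<bar> = \<bar>t - x\<bar> ^ n * h t"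
  proof eventually_elim
    case (elim t)
    then have "norm (complex_of_real (f t - f x)) = norm (complex_of_real (t - x) ^ n * g (of_real t))"
      by (rule arg_cong)
    then show ?case
      unfolding h_def norm_mult norm_power norm_of_real .
  qed
  from landau_theta.in_cong[OF this, THEN iffD2, OF bigtheta]
  show ?thesis
    unfolding landau_theta.abs_in_iff landau_theta.abs .
qed

lemma least_nonzero_higher_derivE:
  assumes "0 < m" "(deriv ^^ m) f x \<noteq> 0"
  obtains n where "0 < n" "n \<le> m" "(deriv ^^ n) f x \<noteq> 0"
    "\<And>i. 0 < i \<Longrightarrow> i < n \<Longrightarrow> (deriv ^^ i) f x = 0"
proof -
  obtain n where "n \<le> m" "\<forall>i<n. \<not> (0 < i \<and> (deriv ^^ i) f x \<noteq> 0)" "0 < n \<and> (deriv ^^ n) f x \<noteq> 0"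
    using ex_least_nat_le[of "\<lambda>i. 0 < i \<and> (deriv ^^ i) f x \<noteq> 0" m] assms by auto
  then show thesis
    using that by blast
qed

lemma power_bigo_power:
  assumes "m \<le> n"
  shows "(\<lambda>t::real. t ^ n) \<in> O[nhds 0](\<lambda>t. t ^ m)"
proof (rule landau_o.big_mono)
  have "\<forall>\<^sub>F t in nhds 0. (t::real) \<in> {-1<..<1}"
    by (rule eventually_nhds_in_open) auto
  then show "\<forall>\<^sub>F t in nhds 0. norm (t ^ n) \<le> norm ((t::real) ^ m)"
  proof eventually_elim
    case (elim t)
    then have "\<bar>t\<bar> ^ n \<le> \<bar>t\<bar> ^ m"
      using assms by (intro power_decreasing) auto
    then show ?case
      by (simp add: power_abs)
  qed
qed

lemma power_not_bigo_power_Suc: "(\<lambda>t::real. t ^ k) \<notin> O[nhds 0](\<lambda>t. t ^ Suc k)"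
proof
  assume "(\<lambda>t::real. t ^ k) \<in> O[nhds 0](\<lambda>t. t ^ Suc k)"
  then have "(\<lambda>t::real. t ^ k * 1) \<in> O[at 0](\<lambda>t. t ^ k * t)"
    using landau_o.big.filter_mono[of "at 0" "nhds 0"] by (simp add: at_within_def mult.commute)
  moreover have nonzero: "\<forall>\<^sub>F t in at 0. (t::real) \<noteq> 0"
    unfolding eventually_at_filter by (rule always_eventually) simp
  then have "\<forall>\<^sub>F t in at 0. (t::real) ^ k \<noteq> 0"
    by eventually_elim simp
  ultimately have "(\<lambda>_. 1) \<in> O[at (0::real)](\<lambda>t. t)"
    by (simp only: landau_o.big.mult_cancel_left[OF bigtheta_refl])
  moreover have "(\<lambda>t. t) \<in> o[at (0::real)](\<lambda>_. 1)"
    by (rule smalloI_tendsto) (auto intro: tendsto_ident_at)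
  ultimately have "\<forall>\<^sub>F t in at 0. (t::real) = 0"
    using landau_o.small_big_asymmetric by blast
  with nonzero have "\<forall>\<^sub>F t in at (0::real). False"
    by eventually_elim simp
  then show False
    by (simp add: eventually_False)
qed

lemma k_vanishing_imp_bigo:
  assumes "has_holomorphic_extension f 0" "k_vanishing f k"
  shows "(\<lambda>t. f t - f 0) \<in> O[nhds 0](\<lambda>t. t ^ Suc k)"
proof (cases "\<forall>i>0. (deriv ^^ i) f 0 = 0")
  case True
  then have "\<forall>\<^sub>F t in nhds 0. f t - f 0 = 0"
    using has_holomorphic_extension_flat[OF assms(1)] by simp
  then show ?thesis
    using landau_o.big.in_cong by fastforce
next
  case False
  then obtain n where n: "0 < n" "(deriv ^^ n) f 0 \<noteq> 0"
    and below: "\<And>i. 0 < i \<Longrightarrow> i < n \<Longrightarrow> (deriv ^^ i) f 0 = 0"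
    using least_nonzero_higher_derivE by blast
  have "Suc k \<le> n"
    using assms(2) n by (cases "n \<le> k") (auto simp: k_vanishing_def)
  have "(\<lambda>t. f t - f 0) \<in> \<Theta>[nhds 0](\<lambda>t. t ^ n)"
    using has_holomorphic_extension_bigtheta_power[OF assms(1) n] below by simp
  then show ?thesis
    using power_bigo_power[OF \<open>Suc k \<le> n\<close>] landau_o.big.in_cong_bigtheta by blast
qed

lemma not_k_vanishing_imp_power_bigo:
  assumes "has_holomorphic_extension f 0" "\<not> k_vanishing f k"
  shows "(\<lambda>t. t ^ k) \<in> O[nhds 0](\<lambda>t. f t - f 0)"
proof -
  obtain m where m: "0 < m" "m \<le> k" "(deriv ^^ m) f 0 \<noteq> 0"
    using assms(2) unfolding k_vanishing_def by (fastforce simp: Suc_le_eq)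
  obtain n where n: "0 < n" "n \<le> m" "(deriv ^^ n) f 0 \<noteq> 0"
    and below: "\<And>i. 0 < i \<Longrightarrow> i < n \<Longrightarrow> (deriv ^^ i) f 0 = 0"
    using least_nonzero_higher_derivE[OF m(1,3)] by blast
  have "(\<lambda>t. t ^ n) \<in> \<Theta>[nhds 0](\<lambda>t. f t - f 0)"
    using has_holomorphic_extension_bigtheta_power[OF assms(1) n(1,3)] below by (simp add: bigtheta_sym)
  moreover have "n \<le> k"
    using n(2) m(2) by simp
  ultimately show ?thesis
    using landau_o.big_trans[OF power_bigo_power bigthetaD1] by blast
qed

lemma k_vanishing_iff_bigo:
  assumes "has_holomorphic_extension f 0"
  shows "k_vanishing f k \<longleftrightarrow> (\<lambda>t. f t - f 0) \<in> O[nhds 0](\<lambda>t. t ^ Suc k)"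
  using k_vanishing_imp_bigo[OF assms] not_k_vanishing_imp_power_bigo[OF assms]
    power_not_bigo_power_Suc landau_o.big_trans by blast

lemma k_vanishing_iff_square_bigo:
  assumes "has_holomorphic_extension f 0" "Suc (k * 2) \<le> m" "m \<le> Suc k * 2"
  shows "k_vanishing f k \<longleftrightarrow> (\<lambda>t. (f t - f 0) ^ 2) \<in> O[nhds 0](\<lambda>t. t ^ m)"
proof
  assume "k_vanishing f k"
  from landau_o.big_power[OF k_vanishing_imp_bigo[OF assms(1) this], of 2]
  have "(\<lambda>t. (f t - f 0) ^ 2) \<in> O[nhds 0](\<lambda>t. t ^ (Suc k * 2))"
    by (simp only: power_mult)
  then show "(\<lambda>t. (f t - f 0) ^ 2) \<in> O[nhds 0](\<lambda>t. t ^ m)"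
    using power_bigo_power[OF assms(3)] landau_o.big_trans by blast
next
  assume squares: "(\<lambda>t. (f t - f 0) ^ 2) \<in> O[nhds 0](\<lambda>t. t ^ m)"
  show "k_vanishing f k"
  proof (rule ccontr)
    assume "\<not> k_vanishing f k"
    from landau_o.big_power[OF not_k_vanishing_imp_power_bigo[OF assms(1) this], of 2]
    have "(\<lambda>t. t ^ (k * 2)) \<in> O[nhds 0](\<lambda>t. (f t - f 0) ^ 2)"
      by (simp only: power_mult)
    from landau_o.big_trans[OF landau_o.big_trans[OF this squares] power_bigo_power[OF assms(2)]]
    have "(\<lambda>t::real. t ^ (k * 2)) \<in> O[nhds 0](\<lambda>t. t ^ Suc (k * 2))" .
    then show False
      using power_not_bigo_power_Suc by blast
  qed
qed

section \<open>Energies with a nondegenerate minimum\<close>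

lemma sum_nonneg_bigo_iff:
  fixes X :: "'s \<Rightarrow> 'a \<Rightarrow> real"
  assumes "finite S" "\<And>s. s \<in> S \<Longrightarrow> \<forall>\<^sub>F t in F. 0 \<le> X s t"
  shows "(\<lambda>t. \<Sum>s\<in>S. X s t) \<in> O[F](g) \<longleftrightarrow> (\<forall>s\<in>S. X s \<in> O[F](g))"
proof
  assume sum: "(\<lambda>t. \<Sum>s\<in>S. X s t) \<in> O[F](g)"
  have nonneg: "\<forall>\<^sub>F t in F. \<forall>s\<in>S. 0 \<le> X s t"
    using assms by (simp add: eventually_ball_finite)
  show "\<forall>s\<in>S. X s \<in> O[F](g)"
  proof
    fix s assume "s \<in> S"
    from nonneg have "\<forall>\<^sub>F t in F. norm (X s t) \<le> norm (\<Sum>s\<in>S. X s t)"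
    proof eventually_elim
      case (elim t)
      then have "X s t \<le> (\<Sum>s\<in>S. X s t)"
        using \<open>s \<in> S\<close> \<open>finite S\<close> by (intro member_le_sum) auto
      with elim \<open>s \<in> S\<close> show ?case
        by simp
    qed
    then have "X s \<in> O[F](\<lambda>t. \<Sum>s\<in>S. X s t)"
      by (rule landau_o.big_mono)
    then show "X s \<in> O[F](g)"
      using sum by (rule landau_o.big_trans)
  qed
next
  assume "\<forall>s\<in>S. X s \<in> O[F](g)"
  then show "(\<lambda>t. \<Sum>s\<in>S. X s t) \<in> O[F](g)"
    by (intro big_sum_in_bigo) auto
qed

lemma local_min_bigtheta_square:
  assumes "has_holomorphic_extension E d" "\<forall>\<^sub>F y in nhds d. E d \<le> E y" "(deriv ^^ 2) E d \<noteq> 0"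
  shows "(\<lambda>y. E y - E d) \<in> \<Theta>[nhds d](\<lambda>y. (y - d) ^ 2)"
proof -
  obtain r where "0 < r" "\<forall>y. \<bar>d - y\<bar> < r \<longrightarrow> E d \<le> E y"
    using assms(2) unfolding eventually_nhds_metric by (auto simp: dist_real_def abs_minus_commute)
  then have "deriv E d = 0"
    using DERIV_local_min[OF has_holomorphic_extension_DERIV[OF assms(1)]] by blast
  then have "(deriv ^^ i) E d = 0" if "0 < i" "i < 2" for i
    using that by (simp add: numeral_2_eq_2 less_Suc_eq)
  with has_holomorphic_extension_bigtheta_power[OF assms(1) _ assms(3)] show ?thesis
    by simp
qed

lemma sqrt_diff_eq:
  assumes "0 \<le> a" "0 < b"
  shows "sqrt a - sqrt b = (a - b) / (sqrt a + sqrt b)"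
proof -
  have "0 < sqrt a + sqrt b"
    using assms by (simp add: add_nonneg_pos)
  moreover have "(sqrt a - sqrt b) * (sqrt a + sqrt b) = a - b"
    using assms by (simp add: algebra_simps real_sqrt_mult_self)
  ultimately show ?thesis
    by (simp add: field_simps)
qed

lemma sqrt_diff_bigtheta:
  assumes "isCont m x" "0 < m x"
  shows "(\<lambda>t. sqrt (m t) - sqrt (m x)) \<in> \<Theta>[nhds x](\<lambda>t. m t - m x)"
proof -
  define h where "h t = 1 / (sqrt (m t) + sqrt (m x))" for t
  have "h \<in> \<Theta>[nhds x](\<lambda>_. 1)"
    using assms unfolding h_def by (intro isCont_imp_bigtheta_1 continuous_intros) auto
  from landau_theta.mult_left[OF this, of "\<lambda>t. m t - m x"]
  have bigtheta: "(\<lambda>t. (m t - m x) * h t) \<in> \<Theta>[nhds x](\<lambda>t. m t - m x)"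
    by (simp only: mult_1_right)
  have "\<forall>\<^sub>F t in nhds x. 0 < m t"
    using isCont_imp_tendsto_nhds[OF assms(1)] assms(2) by (rule order_tendstoD)
  then have "\<forall>\<^sub>F t in nhds x. sqrt (m t) - sqrt (m x) = (m t - m x) * h t"
    by eventually_elim (use assms(2) in \<open>simp add: h_def sqrt_diff_eq\<close>)
  from landau_theta.in_cong[OF this, THEN iffD2, OF bigtheta]
  show ?thesis .
qed

lemma energy_term_bigtheta:
  assumes m: "isCont m x" "0 < m x"
    and E: "has_holomorphic_extension E (sqrt (m x))"
      "\<forall>\<^sub>F y in nhds (sqrt (m x)). E (sqrt (m x)) \<le> E y"
      "(deriv ^^ 2) E (sqrt (m x)) \<noteq> 0"
  shows "(\<lambda>t. E (sqrt (m t)) - E (sqrt (m x))) \<in> \<Theta>[nhds x](\<lambda>t. (m t - m x) ^ 2)"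
    and "\<forall>\<^sub>F t in nhds x. E (sqrt (m x)) \<le> E (sqrt (m t))"
proof -
  have "isCont (\<lambda>t. sqrt (m t)) x"
    using m(1) by (rule continuous_intros)
  then have lim: "filterlim (\<lambda>t. sqrt (m t)) (nhds (sqrt (m x))) (nhds x)"
    by (rule isCont_imp_tendsto_nhds)
  from landau_theta.compose[OF local_min_bigtheta_square[OF E] lim]
  have "(\<lambda>t. E (sqrt (m t)) - E (sqrt (m x))) \<in> \<Theta>[nhds x](\<lambda>t. (sqrt (m t) - sqrt (m x)) ^ 2)" .
  moreover have "(\<lambda>t. (sqrt (m t) - sqrt (m x)) ^ 2) \<in> \<Theta>[nhds x](\<lambda>t. (m t - m x) ^ 2)"
    using landau_theta.mult[OF sqrt_diff_bigtheta[OF m] sqrt_diff_bigtheta[OF m]]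
    by (simp only: power2_eq_square)
  ultimately show "(\<lambda>t. E (sqrt (m t)) - E (sqrt (m x))) \<in> \<Theta>[nhds x](\<lambda>t. (m t - m x) ^ 2)"
    by (rule landau_theta.trans)
  show "\<forall>\<^sub>F t in nhds x. E (sqrt (m x)) \<le> E (sqrt (m t))"
    using E(2) lim by (rule eventually_compose_filterlim)
qed

lemma energy_k_vanishing_iff:
  fixes m E :: "'s \<Rightarrow> real \<Rightarrow> real"
  assumes "finite S"
    and m: "\<And>s. s \<in> S \<Longrightarrow> has_holomorphic_extension (m s) 0" "\<And>s. s \<in> S \<Longrightarrow> 0 < m s 0"
    and E: "\<And>s. s \<in> S \<Longrightarrow> has_holomorphic_extension (E s) (sqrt (m s 0))"
      "\<And>s. s \<in> S \<Longrightarrow> \<forall>\<^sub>F y in nhds (sqrt (m s 0)). E s (sqrt (m s 0)) \<le> E s y"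
      "\<And>s. s \<in> S \<Longrightarrow> (deriv ^^ 2) (E s) (sqrt (m s 0)) \<noteq> 0"
    and "k * 2 \<le> i" "i \<le> Suc (k * 2)"
  shows "(\<forall>s\<in>S. k_vanishing (m s) k) \<longleftrightarrow> k_vanishing (\<lambda>t. \<Sum>s\<in>S. E s (sqrt (m s t))) i"
proof -
  define e where "e t = (\<Sum>s\<in>S. E s (sqrt (m s t)))" for t
  define X where "X s t = E s (sqrt (m s t)) - E s (sqrt (m s 0))" for s t
  have "has_holomorphic_extension (\<lambda>t. E s (sqrt (m s t))) 0" if "s \<in> S" for s
    using has_holomorphic_extension_compose[OF has_holomorphic_extension_compose[OF m(1)
        has_holomorphic_extension_sqrt[OF m(2)]] E(1)] that by blast
  then have "has_holomorphic_extension e 0"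
    unfolding e_def by (rule has_holomorphic_extension_sum)
  have X: "X s \<in> \<Theta>[nhds 0](\<lambda>t. (m s t - m s 0) ^ 2)" "\<forall>\<^sub>F t in nhds 0. 0 \<le> X s t"
    if "s \<in> S" for s
    using energy_term_bigtheta[OF has_holomorphic_extension_imp_isCont[OF m(1)] m(2) E, OF that that that that that]
    unfolding X_def by auto
  have bounds: "Suc (k * 2) \<le> Suc i" "Suc i \<le> Suc k * 2"
    using assms(7,8) by simp_all
  have "(\<forall>s\<in>S. k_vanishing (m s) k) \<longleftrightarrow>
      (\<forall>s\<in>S. (\<lambda>t. (m s t - m s 0) ^ 2) \<in> O[nhds 0](\<lambda>t. t ^ Suc i))"
    using k_vanishing_iff_square_bigo[OF m(1) bounds] by (rule ball_cong[OF refl])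
  also have "\<dots> \<longleftrightarrow> (\<forall>s\<in>S. X s \<in> O[nhds 0](\<lambda>t. t ^ Suc i))"
    by (simp add: landau_o.big.in_cong_bigtheta[OF X(1)])
  also have "\<dots> \<longleftrightarrow> (\<lambda>t. \<Sum>s\<in>S. X s t) \<in> O[nhds 0](\<lambda>t. t ^ Suc i)"
    using sum_nonneg_bigo_iff[OF \<open>finite S\<close> X(2)] by simp
  also have "(\<lambda>t. \<Sum>s\<in>S. X s t) = (\<lambda>t. e t - e 0)"
    unfolding e_def X_def by (simp add: sum_subtractf)
  also have "\<dots> \<in> O[nhds 0](\<lambda>t. t ^ Suc i) \<longleftrightarrow> k_vanishing e i"
    using k_vanishing_iff_bigo[OF \<open>has_holomorphic_extension e 0\<close>] by simp
  finally show ?thesis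
    unfolding e_def .
qed

section \<open>Bar frameworks\<close>

lemma trajectory_squared_distance_holomorphic:
  assumes "trajectory n l p \<epsilon> P" "a \<in> {1..n}" "b \<in> {1..n}"
  shows "has_holomorphic_extension (\<lambda>t. (norm (P t a - P t b))\<^sup>2) 0"
proof -
  have coord: "has_holomorphic_extension (\<lambda>t. P t i $ c) 0" if "i \<in> {1..n}" for i c
    using assms(1) that unfolding trajectory_def
    by (auto intro: real_analytic_at_imp_has_holomorphic_extension)
  have "(\<lambda>t. (norm (P t a - P t b))\<^sup>2) = (\<lambda>t. \<Sum>c\<in>UNIV. (P t a $ c - P t b $ c) * (P t a $ c - P t b $ c))"
    by (simp add: power2_norm_eq_inner inner_vec_def)
  then show ?thesis
    using coord assms(2,3)
    by (simp add: has_holomorphic_extension_sum has_holomorphic_extension_mult has_holomorphic_extension_diff)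
qed

lemma stiff_bar_energyD:
  assumes "stiff_bar_energy Ed Eij p" "(a, b) \<in> Ed"
  shows "has_holomorphic_extension (Eij a b) (norm (p a - p b))"
    and "\<forall>\<^sub>F y in nhds (norm (p a - p b)). Eij a b (norm (p a - p b)) \<le> Eij a b y"
    and "(deriv ^^ 2) (Eij a b) (norm (p a - p b)) \<noteq> 0"
proof -
  define d where "d = norm (p a - p b)"
  have "real_analytic_at (Eij a b) d"
    and min: "\<exists>r>0. \<forall>x. 0 < \<bar>x - d\<bar> \<and> \<bar>x - d\<bar> < r \<longrightarrow> Eij a b d < Eij a b x"
    and "(deriv ^^ 2) (Eij a b) d > 0"
    using assms unfolding stiff_bar_energy_def d_def Let_def by auto
  then show "has_holomorphic_extension (Eij a b) (norm (p a - p b))"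
    and "(deriv ^^ 2) (Eij a b) (norm (p a - p b)) \<noteq> 0"
    unfolding d_def by (simp_all add: real_analytic_at_imp_has_holomorphic_extension)
  from min obtain r where "r > 0" "\<And>x. 0 < \<bar>x - d\<bar> \<Longrightarrow> \<bar>x - d\<bar> < r \<Longrightarrow> Eij a b d < Eij a b x"
    by blast
  then have "\<forall>\<^sub>F y in nhds d. Eij a b d \<le> Eij a b y"
    unfolding eventually_nhds_metric dist_real_def by (metis less_eq_real_def zero_less_abs_iff right_minus_eq)
  then show "\<forall>\<^sub>F y in nhds (norm (p a - p b)). Eij a b (norm (p a - p b)) \<le> Eij a b y"
    by (simp add: d_def)
qed

lemma framework_energy_k_vanishing_iff:
  assumes "framework n Ed p" "stiff_bar_energy Ed Eij p" "trajectory n l p \<epsilon> P"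
    and "k * 2 \<le> i" "i \<le> Suc (k * 2)"
  shows "(\<forall>(a, b)\<in>Ed. k_vanishing (\<lambda>t. (norm (P t a - P t b))\<^sup>2) k) \<longleftrightarrow>
    k_vanishing (\<lambda>t. energy Ed Eij (P t)) i"
proof -
  define m where "m s t = (norm (P t (fst s) - P t (snd s)))\<^sup>2" for s t
  define E where "E s = Eij (fst s) (snd s)" for s
  have edges: "fst s \<in> {1..n}" "snd s \<in> {1..n}" "p (fst s) \<noteq> p (snd s)" if "s \<in> Ed" for s
    using assms(1) that unfolding framework_def is_graph_def by auto
  then have "finite Ed"
    by (intro finite_subset[of Ed "{1..n} \<times> {1..n}"]) (auto simp: mem_Times_iff)
  have m0: "sqrt (m s 0) = norm (p (fst s) - p (snd s))" if "s \<in> Ed" for s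
    using assms(3) edges[OF that] unfolding m_def trajectory_def by simp
  have "(\<forall>s\<in>Ed. k_vanishing (m s) k) \<longleftrightarrow> k_vanishing (\<lambda>t. \<Sum>s\<in>Ed. E s (sqrt (m s t))) i"
  proof (rule energy_k_vanishing_iff[OF \<open>finite Ed\<close> _ _ _ _ _ assms(4,5)])
    fix s assume "s \<in> Ed"
    show "has_holomorphic_extension (m s) 0"
      unfolding m_def using trajectory_squared_distance_holomorphic[OF assms(3)] edges[OF \<open>s \<in> Ed\<close>] by blast
    show "0 < m s 0"
      using m0[OF \<open>s \<in> Ed\<close>] edges[OF \<open>s \<in> Ed\<close>] by (simp add: m_def)
    show "has_holomorphic_extension (E s) (sqrt (m s 0))"
      and "\<forall>\<^sub>F y in nhds (sqrt (m s 0)). E s (sqrt (m s 0)) \<le> E s y"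
      and "(deriv ^^ 2) (E s) (sqrt (m s 0)) \<noteq> 0"
      using stiff_bar_energyD[OF assms(2), of "fst s" "snd s"] \<open>s \<in> Ed\<close>
      unfolding E_def m0[OF \<open>s \<in> Ed\<close>] by auto
  qed
  moreover have "(\<lambda>t. energy Ed Eij (P t)) = (\<lambda>t. \<Sum>s\<in>Ed. E s (sqrt (m s t)))"
    unfolding energy_def E_def m_def by (simp add: case_prod_beta)
  moreover have "(\<forall>(a, b)\<in>Ed. k_vanishing (\<lambda>t. (norm (P t a - P t b))\<^sup>2) k) \<longleftrightarrow>
      (\<forall>s\<in>Ed. k_vanishing (m s) k)"
    unfolding m_def by (simp add: case_prod_beta)
  ultimately show ?thesis
    by (simp only:)
qed

theorem theorem3p13:
  fixes n l :: nat and Ed :: "(nat \<times> nat) set"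
    and p :: "nat \<Rightarrow> real^'d::{finite,linorder}"
    and Eij :: "nat \<Rightarrow> nat \<Rightarrow> real \<Rightarrow> real"
    and \<epsilon> :: real and P :: "real \<Rightarrow> nat \<Rightarrow> real^'d::{finite,linorder}" and j k :: nat
  assumes "framework n Ed p"
    and "pinned n l p"
    and "stiff_bar_energy Ed Eij p"
    and "trajectory n l p \<epsilon> P"
  shows "(bar_flex n Ed l p \<epsilon> P j k \<longleftrightarrow> f_flex n l p \<epsilon> (energy Ed Eij) P j (2 * k))
       \<and> (f_flex n l p \<epsilon> (energy Ed Eij) P j (2 * k) \<longleftrightarrow> f_flex n l p \<epsilon> (energy Ed Eij) P j (2 * k + 1))"
proof -
  have bars: "(\<forall>(a, b)\<in>Ed. k_vanishing (\<lambda>t. (norm (P t a - P t b))\<^sup>2) k) \<longleftrightarrow>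
      k_vanishing (\<lambda>t. energy Ed Eij (P t)) (2 * k)"
    and "(\<forall>(a, b)\<in>Ed. k_vanishing (\<lambda>t. (norm (P t a - P t b))\<^sup>2) k) \<longleftrightarrow>
      k_vanishing (\<lambda>t. energy Ed Eij (P t)) (2 * k + 1)"
    by (rule framework_energy_k_vanishing_iff[OF assms(1,3,4)]; simp)+
  then have "k_vanishing (\<lambda>t. energy Ed Eij (P t)) (2 * k) \<longleftrightarrow>
      k_vanishing (\<lambda>t. energy Ed Eij (P t)) (2 * k + 1)"
    by blast
  with bars show ?thesis
    unfolding bar_flex_def f_flex_def by (simp only:)
qed

end
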